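(* There exist dynamic flow networks with only one capacity change in which every minimum dynamic cut and every maximum dynamic flow has exponential complexity: for every $\ell\in\mathbb{N}^+$ there is a dynamic flow network of size polynomial in $\ell$ with only one capacity change such that every minimum dynamic cut and every maximum dynamic flow has complexity at least $2^\ell$. This holds even with acyclic underlying graphs and with discrete time (all transit times, capacity change times and the time horizon being integer multiples of a common time unit, so that time may be discretized into units of that length).
   Context: A dynamic flow network with time-dependent capacities: directed graph $G=(V,E)$, source $s$, target $t$, time horizon $T$, constant transit times $\tau_e\ge0$ and capacity functions $u_e\colon[0,T]\to\mathbb{R}_{\ge0}$ with finitely many discontinuities; "only one capacity change" means all capacities are constant except one edge whose capacity function has a single jump. A dynamic flow is a family of measurable $f_e\colon[0,T-\tau_e]\to\mathbb{R}$ with $f_e\le u_e$ and strong flow conservation (excess $\int_0^\Theta(\sum_{e=(u,v)}f_e(\zeta-\tau_e)-\sum_{e=(v,u)}f_e(\zeta))d\zeta=0$ for all $v\ne s,t$, $\Theta\in[0,T]$); its value is the excess of $t$ at $T$. A dynamic cut is a family $S_v\colon[0,T]\to\{0,1\}$ with $S_s\equiv1$, $S_t\equiv0$ on $[0,T]$, $S_v(\Theta)=1$ for $\Theta>T$, of capacity $\int_0^T\sum_{e=(v,w):S_v(\Theta)=1,S_w(\Theta+\tau_e)=0}u_e(\Theta)d\Theta$. A vertex changes partition at $\Theta$ if $S_v(\Theta-\delta)\ne S_v(\Theta+\delta)$ for all small $\delta>0$; the complexity of a cut is the total number of partition changes over all vertices. Analogously, the complexity of a flow is the total number of changes of the functions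 $f_e$ over all edges.
   Formalization: The complexity of a cut or flow counts essential change points, where $S_v$ or $f_e$ is not almost everywhere constant on any neighbourhood, instead of points with $S_v(\Theta-\delta)\ne S_v(\Theta+\delta)$ for all small delta; cuts are measurable and flows nonnegative. Each condition added here is assumed in the paper as well or is needed for the statement above to hold. *)

theory Defs
  imports "HOL-Analysis.Analysis" "HOL-Library.Extended_Nat"
begin

record dyn_network =
  nverts :: "nat set"
  nedges :: "(nat \<times> nat) set"
  nsrc :: nat
  nsnk :: nat
  nhorizon :: real
  ntransit :: "nat \<times> nat \<Rightarrow> real"
  ncap :: "nat \<times> nat \<Rightarrow> real \<Rightarrow> real"

definition valid_network :: "dyn_network \<Rightarrow> bool" where
  "valid_network N \<longleftrightarrow>
     finite (nverts N) \<and> nedges N \<subseteq> nverts N \<times> nverts N \<and>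
     nsrc N \<in> nverts N \<and> nsnk N \<in> nverts N \<and> nsrc N \<noteq> nsnk N \<and>
     0 \<le> nhorizon N \<and>
     (\<forall>e\<in>nedges N. 0 \<le> ntransit N e) \<and>
     (\<forall>e\<in>nedges N. \<forall>\<theta>\<in>{0..nhorizon N}. 0 \<le> ncap N e \<theta>) \<and>
     (\<forall>e\<in>nedges N. finite {\<theta>\<in>{0..nhorizon N}.
          \<not> continuous (at \<theta> within {0..nhorizon N}) (ncap N e)})"

definition one_capacity_change :: "dyn_network \<Rightarrow> bool" where
  "one_capacity_change N \<longleftrightarrow>
     (\<exists>e0\<in>nedges N. \<exists>\<theta>0 a b. 0 < \<theta>0 \<and> \<theta>0 < nhorizon N \<and> a \<noteq> b \<and>
        (\<forall>\<theta>\<in>{0..nhorizon N}. \<theta> \<noteq> \<theta>0 \<longrightarrow> ncap N e0 \<theta> = (if \<theta> < \<theta>0 then a else b)) \<and>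
        (\<forall>e\<in>nedges N - {e0}. \<exists>c. \<forall>\<theta>\<in>{0..nhorizon N}. ncap N e \<theta> = c))"

text \<open>Discrete time (time unit 1): horizon, transit times and capacity change
  times (discontinuities of capacity functions) are integers.\<close>
definition discrete_time :: "dyn_network \<Rightarrow> bool" where
  "discrete_time N \<longleftrightarrow>
     nhorizon N \<in> \<nat> \<and>
     (\<forall>e\<in>nedges N. ntransit N e \<in> \<nat>) \<and>
     (\<forall>e\<in>nedges N. \<forall>\<theta>\<in>{0..nhorizon N}.
        \<not> continuous (at \<theta> within {0..nhorizon N}) (ncap N e) \<longrightarrow> \<theta> \<in> \<nat>)"

definition integral_capacities :: "dyn_network \<Rightarrow> bool" where
  "integral_capacities N \<longleftrightarrow> (\<forall>e\<in>nedges N. \<forall>\<theta>\<in>{0..nhorizon N}. ncap N e \<theta> \<in> \<nat>)"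

text \<open>Size bound: at most B vertices and edges, all numbers have at most B bits.\<close>
definition size_bounded :: "dyn_network \<Rightarrow> nat \<Rightarrow> bool" where
  "size_bounded N B \<longleftrightarrow>
     card (nverts N) \<le> B \<and> card (nedges N) \<le> B \<and>
     nhorizon N \<le> 2 ^ B \<and>
     (\<forall>e\<in>nedges N. ntransit N e \<le> 2 ^ B) \<and>
     (\<forall>e\<in>nedges N. \<forall>\<theta>\<in>{0..nhorizon N}. ncap N e \<theta> \<le> 2 ^ B)"

text \<open>Dynamic flows; f e is extended by 0 outside its domain [0, T - tau_e].\<close>
definition excess :: "dyn_network \<Rightarrow> (nat \<times> nat \<Rightarrow> real \<Rightarrow> real) \<Rightarrow> nat \<Rightarrow> real \<Rightarrow> real" where
  "excess N f v \<Theta> =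
     (LINT \<zeta>:{0..\<Theta>}|lborel.
        (\<Sum>e\<in>{e\<in>nedges N. snd e = v}. f e (\<zeta> - ntransit N e))
      - (\<Sum>e\<in>{e\<in>nedges N. fst e = v}. f e \<zeta>))"

definition is_dyn_flow :: "dyn_network \<Rightarrow> (nat \<times> nat \<Rightarrow> real \<Rightarrow> real) \<Rightarrow> bool" where
  "is_dyn_flow N f \<longleftrightarrow>
     (\<forall>e\<in>nedges N. f e \<in> borel_measurable lborel) \<and>
     (\<forall>e\<in>nedges N. \<forall>\<theta>.
        if 0 \<le> \<theta> \<and> \<theta> \<le> nhorizon N - ntransit N e
        then 0 \<le> f e \<theta> \<and> f e \<theta> \<le> ncap N e \<theta>
        else f e \<theta> = 0) \<and>
     (\<forall>v\<in>nverts N - {nsrc N, nsnk N}. \<forall>\<Theta>\<in>{0..nhorizon N}. excess N f v \<Theta> = 0)"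

definition flow_value :: "dyn_network \<Rightarrow> (nat \<times> nat \<Rightarrow> real \<Rightarrow> real) \<Rightarrow> real" where
  "flow_value N f = excess N f (nsnk N) (nhorizon N)"

definition is_max_dyn_flow :: "dyn_network \<Rightarrow> (nat \<times> nat \<Rightarrow> real \<Rightarrow> real) \<Rightarrow> bool" where
  "is_max_dyn_flow N f \<longleftrightarrow> is_dyn_flow N f \<and>
     (\<forall>g. is_dyn_flow N g \<longrightarrow> flow_value N g \<le> flow_value N f)"

text \<open>Dynamic cuts: S v \<theta> = True means v is on the source side at time \<theta>.\<close>
definition is_dyn_cut :: "dyn_network \<Rightarrow> (nat \<Rightarrow> real \<Rightarrow> bool) \<Rightarrow> bool" where
  "is_dyn_cut N S \<longleftrightarrow>
     (\<forall>v\<in>nverts N. {\<theta>. S v \<theta>} \<in> sets lborel) \<and>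
     (\<forall>\<theta>\<in>{0..nhorizon N}. S (nsrc N) \<theta> \<and> \<not> S (nsnk N) \<theta>) \<and>
     (\<forall>v\<in>nverts N. \<forall>\<theta>. nhorizon N < \<theta> \<longrightarrow> S v \<theta>)"

definition cut_capacity :: "dyn_network \<Rightarrow> (nat \<Rightarrow> real \<Rightarrow> bool) \<Rightarrow> real" where
  "cut_capacity N S =
     (LINT \<Theta>:{0..nhorizon N}|lborel.
        (\<Sum>e\<in>nedges N. if S (fst e) \<Theta> \<and> \<not> S (snd e) (\<Theta> + ntransit N e)
                        then ncap N e \<Theta> else 0))"

definition is_min_dyn_cut :: "dyn_network \<Rightarrow> (nat \<Rightarrow> real \<Rightarrow> bool) \<Rightarrow> bool" where
  "is_min_dyn_cut N S \<longleftrightarrow> is_dyn_cut N S \<and>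
     (\<forall>S'. is_dyn_cut N S' \<longrightarrow> cut_capacity N S \<le> cut_capacity N S')"

definition ecard :: "'a set \<Rightarrow> enat" where
  "ecard A = (if finite A then enat (card A) else \<infinity>)"

text \<open>g changes at \<Theta> (relative to domain D): g is not almost-everywhere constant
  on any neighbourhood of \<Theta> within D (robust against modification on null sets).\<close>
definition ess_change :: "real set \<Rightarrow> (real \<Rightarrow> 'a) \<Rightarrow> real \<Rightarrow> bool" where
  "ess_change D g \<Theta> \<longleftrightarrow>
     (\<forall>\<epsilon>>0. \<not> (\<exists>c. AE x in lborel. x \<in> D \<and> dist x \<Theta> < \<epsilon> \<longrightarrow> g x = c))"

definition cut_complexity :: "dyn_network \<Rightarrow> (nat \<Rightarrow> real \<Rightarrow> bool) \<Rightarrow> enat" where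
  "cut_complexity N S =
     ecard {(v, \<Theta>). v \<in> nverts N \<and> 0 < \<Theta> \<and> ess_change {0..} (S v) \<Theta>}"

definition flow_complexity :: "dyn_network \<Rightarrow> (nat \<times> nat \<Rightarrow> real \<Rightarrow> real) \<Rightarrow> enat" where
  "flow_complexity N f =
     ecard {(e, \<Theta>). e \<in> nedges N \<and> 0 < \<Theta> \<and> \<Theta> < nhorizon N - ntransit N e \<and>
                    ess_change {0..nhorizon N - ntransit N e} (f e) \<Theta>}"

end

(*
  The network is a path x_0 -> ... -> x_l of transit time 0 together with, for each i < l, a
  detour x_i -> y_i -> x_(i+1) that delays flow by 2^(i+1). The source can send only during
  [0, 1) and the sink edge x_l -> t has capacity 1, so every unit pulse [2k, 2k+1), k < 2^l,
  arrives at x_l along its own combination of detours. An explicit flow and cut of equal value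
  are optimal by weak duality, where the duality gap is the integral of a pointwise nonnegative
  slack. Complementary slackness then forces every minimum cut to contain x_l, and every maximum
  flow to saturate x_l -> t, exactly during these 2^l pulses, so both change at every time 2k+1.
*)

theory Submission
  imports Defs
begin

lemma AE_translate:
  fixes c :: real
  assumes "AE x in lborel. P x"
  shows "AE x in lborel. P (x + c)"
proof -
  have "AE x in distr lborel borel ((+) c). P x"
    using assms by (subst lborel_distr_plus)
  then have "AE x in lborel. P (c + x)"
    by (rule AE_distrD[rotated]) simp
  then show ?thesis
    by (simp add: add.commute)
qed

lemma AE_const_on_interval_unique:
  fixes p q :: real
  assumes "AE x in lborel. x \<in> {p<..<q} \<longrightarrow> h x = c" "AE x in lborel. x \<in> {p<..<q} \<longrightarrow> h x = d"
    and "p < q"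
  shows "c = d"
proof (rule ccontr)
  assume "c \<noteq> d"
  from assms(1,2) have "AE x in lborel. x \<notin> {p<..<q}"
    by eventually_elim (use \<open>c \<noteq> d\<close> in auto)
  then have "{p<..<q} \<in> null_sets lborel"
    by (subst AE_iff_null_sets) auto
  with \<open>p < q\<close> show False
    by (auto simp: null_sets_def)
qed

lemma integrable_bounded_supported_Icc:
  fixes g :: "real \<Rightarrow> real"
  assumes "g \<in> borel_measurable borel" "\<And>x. \<bar>g x\<bar> \<le> K" "\<And>x. x \<notin> {a..b} \<Longrightarrow> g x = 0"
  shows "integrable lborel g"
proof (rule Bochner_Integration.integrable_bound)
  show "integrable lborel (\<lambda>x. indicator {a..b} x * K)"
    by (intro integrable_mult_left integrable_real_indicator) (auto simp: emeasure_lborel_Icc_eq)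
  show "AE x in lborel. norm (g x) \<le> norm (indicator {a..b} x * K)"
  proof (intro AE_I2)
    show "norm (g x) \<le> norm (indicator {a..b} x * K)" for x
      using assms(2)[of x] assms(3)[of x] by (cases "x \<in> {a..b}") auto
  qed
qed (use assms(1) in simp)

text \<open>Comparing the densities of the positive and negative parts of \<open>g\<close>, which agree on all
  half-lines and hence everywhere.\<close>

lemma AE_zero_if_tail_integrals_zero:
  fixes g :: "real \<Rightarrow> real"
  assumes g: "integrable lborel g"
    and tails: "\<And>a. (\<integral>x. indicator {a<..} x * g x \<partial>lborel) = 0"
  shows "AE x in lborel. g x = 0"
proof -
  define p where "p x = max 0 (g x)" for x
  define q where "q x = max 0 (- g x)" for x
  have ip: "integrable lborel p" and iq: "integrable lborel q"
    unfolding p_def q_def using g by auto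
  have p0: "0 \<le> p x" and q0: "0 \<le> q x" for x
    by (simp_all add: p_def q_def)
  have tail_density: "emeasure (density lborel (\<lambda>x. ennreal (h x))) {a<..}
      = ennreal (\<integral>x. indicator {a<..} x * h x \<partial>lborel)"
    if h: "integrable lborel h" "\<And>x. 0 \<le> h x" for h :: "real \<Rightarrow> real" and a
  proof -
    have "integrable lborel (\<lambda>x. indicator {a<..} x * h x)"
      using integrable_mult_indicator[OF _ h(1), of "{a<..}"] by simp
    moreover have "emeasure (density lborel (\<lambda>x. ennreal (h x))) {a<..}
        = (\<integral>\<^sup>+x. ennreal (indicator {a<..} x * h x) \<partial>lborel)"
      using h by (subst emeasure_density) (auto intro!: nn_integral_cong simp: indicator_def)
    ultimately show ?thesis
      using h(2) by (simp add: nn_integral_eq_integral)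
  qed
  have "(\<integral>x. indicator {a<..} x * p x \<partial>lborel) = (\<integral>x. indicator {a<..} x * q x \<partial>lborel)" for a
  proof -
    have "integrable lborel (\<lambda>x. indicator {a<..} x * p x)" "integrable lborel (\<lambda>x. indicator {a<..} x * q x)"
      using integrable_mult_indicator[OF _ ip, of "{a<..}"] integrable_mult_indicator[OF _ iq, of "{a<..}"]
      by simp_all
    moreover have "(\<lambda>x. indicator {a<..} x * g x) = (\<lambda>x. indicator {a<..} x * p x - indicator {a<..} x * q x)"
      by (auto simp: p_def q_def fun_eq_iff max_def)
    ultimately show ?thesis
      using tails[of a] by simp
  qed
  then have "density lborel (\<lambda>x. ennreal (p x)) = density lborel (\<lambda>x. ennreal (q x))"
    using ip iq p0 q0 by (intro measure_eqI_lessThan) (auto simp: tail_density)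
  then have "AE x in lborel. ennreal (p x) = ennreal (q x)"
    using ip iq by (intro sigma_finite_measure.density_unique[OF sigma_finite_lborel]) auto
  then show ?thesis
    by (rule AE_mp) (auto simp: p_def q_def max_def)
qed

lemma AE_zero_if_interval_integrals_zero:
  fixes r :: "real \<Rightarrow> real"
  assumes r: "set_integrable lborel {0..T} r"
    and zero: "\<And>\<Theta>. \<Theta> \<in> {0..T} \<Longrightarrow> (LINT x:{0..\<Theta>}|lborel. r x) = 0"
  shows "AE x in lborel. x \<in> {0..T} \<longrightarrow> r x = 0"
proof -
  define g where "g x = indicator {0..T} x * r x" for x
  have ig: "integrable lborel g"
    using r unfolding set_integrable_def g_def by simp
  have "(\<integral>x. indicator {a<..} x * g x \<partial>lborel) = 0" for a
  proof -
    consider "a < 0" | "T < a" | "0 \<le> a" "a \<le> T"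
      by linarith
    then show ?thesis
    proof cases
      case 1
      then have "(\<lambda>x. indicator {a<..} x * g x) = (\<lambda>x. indicator {0..T} x *\<^sub>R r x)"
        by (auto simp: g_def indicator_def fun_eq_iff)
      then show ?thesis
        using zero[of T] by (cases "0 \<le> T") (auto simp: set_lebesgue_integral_def)
    next
      case 2
      then have "(\<lambda>x. indicator {a<..} x * g x) = (\<lambda>x. 0)"
        by (auto simp: g_def indicator_def fun_eq_iff)
      then show ?thesis
        by simp
    next
      case 3
      have "(\<lambda>x. indicator {a<..} x * g x) = (\<lambda>x. indicator {0..T} x *\<^sub>R r x - indicator {0..a} x *\<^sub>R r x)"
        using 3 by (auto simp: g_def indicator_def fun_eq_iff)
      moreover have "set_integrable lborel {0..a} r"
        by (rule set_integrable_subset[OF r]) (use 3 in auto)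
      ultimately show ?thesis
        using zero[of T] zero[of a] 3 r
        by (simp add: set_lebesgue_integral_def set_integrable_def)
    qed
  qed
  then have "AE x in lborel. g x = 0"
    by (rule AE_zero_if_tail_integrals_zero[OF ig])
  then show ?thesis
    by (rule AE_mp) (auto simp: g_def)
qed

lemma card_le_ecard_if_inj_on:
  assumes "inj_on g A" "g ` A \<subseteq> Z" "finite A"
  shows "enat (card A) \<le> ecard Z"
proof (cases "finite Z")
  case True
  then have "card (g ` A) \<le> card Z"
    using assms(2) by (rule card_mono)
  with True show ?thesis
    using assms(1) by (simp add: ecard_def card_image)
qed (simp add: ecard_def)

lemma acyclic_if_rank_increasing:
  fixes rank :: "'a \<Rightarrow> nat"
  assumes "\<And>a b. (a, b) \<in> R \<Longrightarrow> rank a < rank b"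
  shows "acyclic R"
proof -
  have "rank a < rank b" if "(a, b) \<in> R\<^sup>+" for a b
    using that
  proof (induction rule: trancl.induct)
    case (trancl_into_trancl a b c)
    then show ?case
      using assms[of b c] by linarith
  qed (rule assms)
  then show ?thesis
    unfolding acyclic_def by blast
qed

section \<open>Weak duality and complementary slackness for dynamic flows\<close>

definition net_inflow :: "dyn_network \<Rightarrow> (nat \<times> nat \<Rightarrow> real \<Rightarrow> real) \<Rightarrow> nat \<Rightarrow> real \<Rightarrow> real" where
  "net_inflow N f v \<zeta> = (\<Sum>e\<in>{e\<in>nedges N. snd e = v}. f e (\<zeta> - ntransit N e))
      - (\<Sum>e\<in>{e\<in>nedges N. fst e = v}. f e \<zeta>)"

lemma excess_eq_integral_net_inflow: "excess N f v \<Theta> = (LINT \<zeta>:{0..\<Theta>}|lborel. net_inflow N f v \<zeta>)"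
  by (simp add: excess_def net_inflow_def)

definition crossing_capacity :: "dyn_network \<Rightarrow> (nat \<Rightarrow> real \<Rightarrow> bool) \<Rightarrow> nat \<times> nat \<Rightarrow> real \<Rightarrow> real" where
  "crossing_capacity N S e \<theta> = indicator {0..nhorizon N} \<theta> *
     (if S (fst e) \<theta> \<and> \<not> S (snd e) (\<theta> + ntransit N e) then ncap N e \<theta> else 0)"

text \<open>Summed over the edges and integrated, the slack is \<open>cut_capacity N S - flow_value N f\<close>; being
  pointwise nonnegative, it yields both weak duality and complementary slackness.\<close>

definition cut_slack ::
    "dyn_network \<Rightarrow> (nat \<times> nat \<Rightarrow> real \<Rightarrow> real) \<Rightarrow> (nat \<Rightarrow> real \<Rightarrow> bool) \<Rightarrow> nat \<times> nat \<Rightarrow> real \<Rightarrow> real" where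
  "cut_slack N f S e \<theta> = crossing_capacity N S e \<theta>
     - f e \<theta> * (of_bool (S (fst e) \<theta>) - of_bool (S (snd e) (\<theta> + ntransit N e)))"

lemma cut_slack_cases:
  assumes "\<theta> \<in> {0..nhorizon N}"
  shows "cut_slack N f S e \<theta> =
    (if S (fst e) \<theta> then if S (snd e) (\<theta> + ntransit N e) then 0 else ncap N e \<theta> - f e \<theta>
     else if S (snd e) (\<theta> + ntransit N e) then f e \<theta> else 0)"
  using assms by (simp add: cut_slack_def crossing_capacity_def)

lemma is_dyn_cut_source: "is_dyn_cut N S \<Longrightarrow> \<theta> \<in> {0..nhorizon N} \<Longrightarrow> S (nsrc N) \<theta>"
  and is_dyn_cut_sink: "is_dyn_cut N S \<Longrightarrow> \<theta> \<in> {0..nhorizon N} \<Longrightarrow> \<not> S (nsnk N) \<theta>"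
  by (simp_all add: is_dyn_cut_def)

lemma dyn_cut_side_measurable:
  assumes "is_dyn_cut N S" "v \<in> nverts N"
  shows "(\<lambda>\<theta>. of_bool (S v \<theta>) :: real) \<in> borel_measurable borel"
    and "(\<lambda>\<theta>. of_bool (S v (\<theta> + c)) :: real) \<in> borel_measurable borel"
proof -
  have [measurable]: "Measurable.pred borel (S v)"
    using assms by (simp add: is_dyn_cut_def Measurable.pred_def)
  show "(\<lambda>\<theta>. of_bool (S v \<theta>) :: real) \<in> borel_measurable borel"
    by measurable
  show "(\<lambda>\<theta>. of_bool (S v (\<theta> + c)) :: real) \<in> borel_measurable borel"
    by measurable
qed

locale bounded_dyn_network =
  fixes N :: dyn_network and K :: real
  assumes valid: "valid_network N"
    and cap_measurable: "\<And>e. e \<in> nedges N \<Longrightarrow> ncap N e \<in> borel_measurable borel"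
    and cap_le: "\<And>e \<theta>. e \<in> nedges N \<Longrightarrow> \<theta> \<in> {0..nhorizon N} \<Longrightarrow> ncap N e \<theta> \<le> K"
    and bound_nonneg: "0 \<le> K"
begin

lemma finite_nverts: "finite (nverts N)"
  and nedges_subset: "nedges N \<subseteq> nverts N \<times> nverts N"
  and transit_nonneg: "e \<in> nedges N \<Longrightarrow> 0 \<le> ntransit N e"
  and cap_nonneg: "e \<in> nedges N \<Longrightarrow> \<theta> \<in> {0..nhorizon N} \<Longrightarrow> 0 \<le> ncap N e \<theta>"
  and sink_in_nverts: "nsnk N \<in> nverts N"
  and source_ne_sink: "nsrc N \<noteq> nsnk N"
  using valid by (simp_all add: valid_network_def)

lemma finite_nedges: "finite (nedges N)"
  using finite_subset[OF nedges_subset] finite_nverts by blast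

lemma edge_tail: "e \<in> nedges N \<Longrightarrow> fst e \<in> nverts N"
  and edge_head: "e \<in> nedges N \<Longrightarrow> snd e \<in> nverts N"
  using nedges_subset by auto

context
  fixes f assumes f: "is_dyn_flow N f"
begin

lemma flow_measurable: "e \<in> nedges N \<Longrightarrow> f e \<in> borel_measurable borel"
  using f by (simp add: is_dyn_flow_def)

lemma flow_on_edge:
  "e \<in> nedges N \<Longrightarrow> if 0 \<le> \<theta> \<and> \<theta> \<le> nhorizon N - ntransit N e
     then 0 \<le> f e \<theta> \<and> f e \<theta> \<le> ncap N e \<theta> else f e \<theta> = 0"
  using f by (simp add: is_dyn_flow_def)

lemma flow_eq_0_outside: "e \<in> nedges N \<Longrightarrow> \<theta> \<notin> {0..nhorizon N - ntransit N e} \<Longrightarrow> f e \<theta> = 0"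
  using flow_on_edge[of e \<theta>] by (auto split: if_splits)

lemma flow_nonneg: "e \<in> nedges N \<Longrightarrow> 0 \<le> f e \<theta>"
  using flow_on_edge[of e \<theta>] by (auto split: if_splits)

lemma flow_le_cap: "e \<in> nedges N \<Longrightarrow> \<theta> \<in> {0..nhorizon N} \<Longrightarrow> f e \<theta> \<le> ncap N e \<theta>"
  using flow_on_edge[of e \<theta>] cap_nonneg[of e \<theta>] by (auto split: if_splits)

lemma flow_abs_le: "e \<in> nedges N \<Longrightarrow> \<bar>f e \<theta>\<bar> \<le> K"
  using flow_nonneg flow_le_cap[of e \<theta>] cap_le[of e \<theta>] flow_eq_0_outside[of e \<theta>] transit_nonneg[of e]
    bound_nonneg
  by (cases "\<theta> \<in> {0..nhorizon N}") auto

lemma integrable_weighted_flow: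
  assumes e: "e \<in> nedges N" and h: "h \<in> borel_measurable borel" "\<And>x. \<bar>h x\<bar> \<le> 1"
  shows "integrable lborel (\<lambda>\<zeta>. h \<zeta> * f e (\<zeta> - c))"
proof (rule integrable_bounded_supported_Icc[where K=K and a=c and b="nhorizon N + c"])
  have [measurable]: "f e \<in> borel_measurable borel"
    using flow_measurable[OF e] .
  show "(\<lambda>\<zeta>. h \<zeta> * f e (\<zeta> - c)) \<in> borel_measurable borel"
    using h by measurable
  show "\<bar>h x * f e (x - c)\<bar> \<le> K" for x
    using mult_mono[OF h(2)[of x] flow_abs_le[OF e, of "x - c"]] by (simp add: abs_mult)
  show "h x * f e (x - c) = 0" if "x \<notin> {c..nhorizon N + c}" for x
  proof -
    have "x - c \<notin> {0..nhorizon N - ntransit N e}"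
      using that transit_nonneg[OF e] by auto
    then show ?thesis
      by (simp add: flow_eq_0_outside[OF e])
  qed
qed

lemma integrable_weighted_flow0:
  "e \<in> nedges N \<Longrightarrow> h \<in> borel_measurable borel \<Longrightarrow> (\<And>x. \<bar>h x\<bar> \<le> 1)
    \<Longrightarrow> integrable lborel (\<lambda>\<zeta>. h \<zeta> * f e \<zeta>)"
  using integrable_weighted_flow[of e h 0] by simp

lemma integrable_net_inflow: "integrable lborel (net_inflow N f v)"
proof -
  have "integrable lborel (\<lambda>\<zeta>. (\<Sum>e\<in>{e\<in>nedges N. snd e = v}. 1 * f e (\<zeta> - ntransit N e))
      - (\<Sum>e\<in>{e\<in>nedges N. fst e = v}. 1 * f e \<zeta>))"
    by (intro Bochner_Integration.integrable_diff Bochner_Integration.integrable_sum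
        integrable_weighted_flow integrable_weighted_flow0) auto
  then show ?thesis
    by (simp add: net_inflow_def[abs_def])
qed

lemma net_inflow_AE_zero:
  assumes v: "v \<in> nverts N - {nsrc N, nsnk N}"
  shows "AE \<zeta> in lborel. \<zeta> \<in> {0..nhorizon N} \<longrightarrow> net_inflow N f v \<zeta> = 0"
proof (rule AE_zero_if_interval_integrals_zero)
  show "set_integrable lborel {0..nhorizon N} (net_inflow N f v)"
    unfolding set_integrable_def using integrable_net_inflow
    by (intro integrable_mult_indicator) auto
  show "(LINT x:{0..\<Theta>}|lborel. net_inflow N f v x) = 0" if "\<Theta> \<in> {0..nhorizon N}" for \<Theta>
    using f v that by (simp add: is_dyn_flow_def excess_eq_integral_net_inflow)
qed

lemma integral_weighted_net_inflow:
  assumes H: "\<And>v. v \<in> nverts N \<Longrightarrow> H v \<in> borel_measurable borel" "\<And>v x. \<bar>H v x\<bar> \<le> 1"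
  shows "(\<integral>\<zeta>. H v \<zeta> * net_inflow N f v \<zeta> \<partial>lborel)
    = (\<Sum>e\<in>{e\<in>nedges N. snd e = v}. \<integral>\<zeta>. H (snd e) \<zeta> * f e (\<zeta> - ntransit N e) \<partial>lborel)
    - (\<Sum>e\<in>{e\<in>nedges N. fst e = v}. \<integral>\<zeta>. H (fst e) \<zeta> * f e \<zeta> \<partial>lborel)"
proof -
  have in_int: "integrable lborel (\<lambda>\<zeta>. H (snd e) \<zeta> * f e (\<zeta> - ntransit N e))"
    and out_int: "integrable lborel (\<lambda>\<zeta>. H (fst e) \<zeta> * f e \<zeta>)" if "e \<in> nedges N" for e
    using integrable_weighted_flow[OF that H(1)[OF edge_head[OF that]] H(2)]
      integrable_weighted_flow0[OF that H(1)[OF edge_tail[OF that]] H(2)] by simp_all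
  have "(\<integral>\<zeta>. H v \<zeta> * net_inflow N f v \<zeta> \<partial>lborel)
      = (\<integral>\<zeta>. (\<Sum>e\<in>{e\<in>nedges N. snd e = v}. H (snd e) \<zeta> * f e (\<zeta> - ntransit N e))
        - (\<Sum>e\<in>{e\<in>nedges N. fst e = v}. H (fst e) \<zeta> * f e \<zeta>) \<partial>lborel)"
    by (rule Bochner_Integration.integral_cong) (simp_all add: net_inflow_def sum_distrib_left right_diff_distrib)
  also have "\<dots>
      = (\<integral>\<zeta>. (\<Sum>e\<in>{e\<in>nedges N. snd e = v}. H (snd e) \<zeta> * f e (\<zeta> - ntransit N e)) \<partial>lborel)
        - (\<integral>\<zeta>. (\<Sum>e\<in>{e\<in>nedges N. fst e = v}. H (fst e) \<zeta> * f e \<zeta>) \<partial>lborel)"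
    by (intro Bochner_Integration.integral_diff Bochner_Integration.integrable_sum)
      (use in_int out_int in blast)+
  finally show ?thesis
    by (subst (1 2) Bochner_Integration.integral_sum[symmetric]) (use in_int out_int in blast)+
qed

text \<open>Summation by parts over the vertices: every edge is counted once at its head, shifted by
  its transit time, and once at its tail.\<close>

lemma sum_weighted_net_inflow:
  assumes H: "\<And>v. v \<in> nverts N \<Longrightarrow> H v \<in> borel_measurable borel" "\<And>v x. \<bar>H v x\<bar> \<le> 1"
  shows "(\<Sum>v\<in>nverts N. \<integral>\<zeta>. H v \<zeta> * net_inflow N f v \<zeta> \<partial>lborel)
    = (\<Sum>e\<in>nedges N. \<integral>\<theta>. (H (snd e) (\<theta> + ntransit N e) - H (fst e) \<theta>) * f e \<theta> \<partial>lborel)"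
proof -
  define A where "A e = (\<integral>\<zeta>. H (snd e) \<zeta> * f e (\<zeta> - ntransit N e) \<partial>lborel)" for e
  define B where "B e = (\<integral>\<zeta>. H (fst e) \<zeta> * f e \<zeta> \<partial>lborel)" for e
  have "(\<Sum>v\<in>nverts N. \<integral>\<zeta>. H v \<zeta> * net_inflow N f v \<zeta> \<partial>lborel)
      = (\<Sum>v\<in>nverts N. \<Sum>e\<in>{e\<in>nedges N. snd e = v}. A e) - (\<Sum>v\<in>nverts N. \<Sum>e\<in>{e\<in>nedges N. fst e = v}. B e)"
    unfolding A_def B_def sum_subtractf[symmetric]
    by (rule sum.cong[OF refl], rule integral_weighted_net_inflow[OF H])
  also have "\<dots> = (\<Sum>e\<in>nedges N. A e - B e)"
    using finite_nverts finite_nedges edge_head edge_tail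
    by (simp add: sum.group sum_subtractf image_subset_iff)
  also have "\<dots> = (\<Sum>e\<in>nedges N. \<integral>\<theta>. (H (snd e) (\<theta> + ntransit N e) - H (fst e) \<theta>) * f e \<theta> \<partial>lborel)"
  proof (rule sum.cong[OF refl])
    fix e assume e: "e \<in> nedges N"
    have "A e = (\<integral>\<theta>. H (snd e) (\<theta> + ntransit N e) * f e \<theta> \<partial>lborel)"
      unfolding A_def
      using lborel_integral_real_affine[of 1 "\<lambda>\<zeta>. H (snd e) \<zeta> * f e (\<zeta> - ntransit N e)" "ntransit N e"]
      by (simp add: add.commute)
    moreover have "integrable lborel (\<lambda>\<theta>. H (snd e) (\<theta> + ntransit N e) * f e \<theta>)"
      using e H edge_head by (intro integrable_weighted_flow0) (auto intro: measurable_compose[OF _ H(1)])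
    ultimately show "A e - B e
        = (\<integral>\<theta>. (H (snd e) (\<theta> + ntransit N e) - H (fst e) \<theta>) * f e \<theta> \<partial>lborel)"
      unfolding B_def using e H edge_tail
      by (simp add: left_diff_distrib integrable_weighted_flow0)
  qed
  finally show ?thesis .
qed

context
  fixes S assumes S: "is_dyn_cut N S"
begin

lemma integral_sink_side_net_inflow:
  assumes v: "v \<in> nverts N"
  shows "(\<integral>\<zeta>. indicator {0..nhorizon N} \<zeta> * (1 - of_bool (S v \<zeta>)) * net_inflow N f v \<zeta> \<partial>lborel)
    = (if v = nsnk N then flow_value N f else 0)"
proof -
  consider "v = nsnk N" | "v = nsrc N" | "v \<in> nverts N - {nsrc N, nsnk N}"
    using v by blast
  then show ?thesis
  proof cases
    case 1
    then have "(\<lambda>\<zeta>. indicator {0..nhorizon N} \<zeta> * (1 - of_bool (S v \<zeta>)) * net_inflow N f v \<zeta>)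
        = (\<lambda>\<zeta>. indicator {0..nhorizon N} \<zeta> * net_inflow N f v \<zeta>)"
      using is_dyn_cut_sink[OF S] by (auto simp: fun_eq_iff indicator_def)
    with 1 show ?thesis
      by (simp add: flow_value_def excess_eq_integral_net_inflow set_lebesgue_integral_def)
  next
    case 2
    then have "(\<lambda>\<zeta>. indicator {0..nhorizon N} \<zeta> * (1 - of_bool (S v \<zeta>)) * net_inflow N f v \<zeta>) = (\<lambda>\<zeta>. 0)"
      using is_dyn_cut_source[OF S] by (auto simp: fun_eq_iff indicator_def)
    with 2 source_ne_sink show ?thesis
      by simp
  next
    case 3
    have "AE \<zeta> in lborel. indicator {0..nhorizon N} \<zeta> * (1 - of_bool (S v \<zeta>)) * net_inflow N f v \<zeta> = 0"
      using net_inflow_AE_zero[OF 3] by eventually_elim (auto simp: indicator_def)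
    with 3 show ?thesis
      by (simp add: integral_eq_zero_AE)
  qed
qed

text \<open>Weight every vertex by the indicator of the sink side during \<open>[0, T]\<close> and sum by parts.\<close>

lemma flow_value_eq_sum_crossing:
  "flow_value N f = (\<Sum>e\<in>nedges N.
     \<integral>\<theta>. f e \<theta> * (of_bool (S (fst e) \<theta>) - of_bool (S (snd e) (\<theta> + ntransit N e))) \<partial>lborel)"
proof -
  define H :: "nat \<Rightarrow> real \<Rightarrow> real" where "H v \<zeta> = indicator {0..nhorizon N} \<zeta> * (1 - of_bool (S v \<zeta>))" for v \<zeta>
  have H_measurable: "H v \<in> borel_measurable borel" if "v \<in> nverts N" for v
    using dyn_cut_side_measurable(1)[OF S that] unfolding H_def by simp
  have H_bound: "\<bar>H v x\<bar> \<le> 1" for v x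
    by (simp add: H_def indicator_def)
  have "flow_value N f = (\<Sum>v\<in>nverts N. \<integral>\<zeta>. H v \<zeta> * net_inflow N f v \<zeta> \<partial>lborel)"
    using finite_nverts sink_in_nverts by (simp add: H_def integral_sink_side_net_inflow)
  also have "\<dots> = (\<Sum>e\<in>nedges N.
      \<integral>\<theta>. (H (snd e) (\<theta> + ntransit N e) - H (fst e) \<theta>) * f e \<theta> \<partial>lborel)"
    using H_measurable H_bound by (rule sum_weighted_net_inflow)
  also have "\<dots> = (\<Sum>e\<in>nedges N.
      \<integral>\<theta>. f e \<theta> * (of_bool (S (fst e) \<theta>) - of_bool (S (snd e) (\<theta> + ntransit N e))) \<partial>lborel)"
  proof (intro sum.cong refl Bochner_Integration.integral_cong)
    fix e \<theta> assume e: "e \<in> nedges N"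
    show "(H (snd e) (\<theta> + ntransit N e) - H (fst e) \<theta>) * f e \<theta>
        = f e \<theta> * (of_bool (S (fst e) \<theta>) - of_bool (S (snd e) (\<theta> + ntransit N e)))"
    proof (cases "\<theta> \<in> {0..nhorizon N - ntransit N e}")
      case True
      then show ?thesis
        using transit_nonneg[OF e] by (simp add: H_def algebra_simps)
    qed (simp add: flow_eq_0_outside[OF e])
  qed
  finally show ?thesis .
qed

lemma integrable_crossing_capacity:
  assumes e: "e \<in> nedges N"
  shows "integrable lborel (crossing_capacity N S e)"
proof (rule integrable_bounded_supported_Icc[where K=K and a=0 and b="nhorizon N"])
  have [measurable]: "ncap N e \<in> borel_measurable borel"
    "(\<lambda>\<theta>. of_bool (S (fst e) \<theta>) :: real) \<in> borel_measurable borel"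
    "(\<lambda>\<theta>. of_bool (S (snd e) (\<theta> + ntransit N e)) :: real) \<in> borel_measurable borel"
    using cap_measurable[OF e] dyn_cut_side_measurable[OF S edge_tail[OF e]]
      dyn_cut_side_measurable[OF S edge_head[OF e]] by auto
  have "crossing_capacity N S e = (\<lambda>\<theta>. indicator {0..nhorizon N} \<theta> * (ncap N e \<theta>
      * of_bool (S (fst e) \<theta>) * (1 - of_bool (S (snd e) (\<theta> + ntransit N e)))))"
    by (auto simp: fun_eq_iff crossing_capacity_def)
  then show "crossing_capacity N S e \<in> borel_measurable borel"
    by simp
  show "\<bar>crossing_capacity N S e \<theta>\<bar> \<le> K" for \<theta>
    using cap_nonneg[OF e, of \<theta>] cap_le[OF e, of \<theta>] bound_nonneg
    by (auto simp: crossing_capacity_def indicator_def)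
qed (simp add: crossing_capacity_def)

lemma cut_capacity_eq_sum_crossing:
  "cut_capacity N S = (\<Sum>e\<in>nedges N. \<integral>\<theta>. crossing_capacity N S e \<theta> \<partial>lborel)"
proof -
  have "cut_capacity N S = (\<integral>\<theta>. (\<Sum>e\<in>nedges N. crossing_capacity N S e \<theta>) \<partial>lborel)"
    by (simp add: cut_capacity_def crossing_capacity_def set_lebesgue_integral_def sum_distrib_left)
  also have "\<dots> = (\<Sum>e\<in>nedges N. \<integral>\<theta>. crossing_capacity N S e \<theta> \<partial>lborel)"
    by (rule Bochner_Integration.integral_sum) (rule integrable_crossing_capacity)
  finally show ?thesis .
qed

lemma cut_slack_nonneg:
  assumes e: "e \<in> nedges N"
  shows "0 \<le> cut_slack N f S e \<theta>"
proof (cases "\<theta> \<in> {0..nhorizon N}")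
  case True
  then show ?thesis
    using flow_nonneg[OF e, of \<theta>] flow_le_cap[OF e True]
    by (auto simp: cut_slack_def crossing_capacity_def)
next
  case False
  then have "\<theta> \<notin> {0..nhorizon N - ntransit N e}"
    using transit_nonneg[OF e] by auto
  with False show ?thesis
    by (simp add: cut_slack_def crossing_capacity_def flow_eq_0_outside[OF e])
qed

lemma integrable_cut_slack:
  assumes e: "e \<in> nedges N"
  shows "integrable lborel (cut_slack N f S e)"
proof -
  have "integrable lborel
      (\<lambda>\<theta>. (of_bool (S (fst e) \<theta>) - of_bool (S (snd e) (\<theta> + ntransit N e))) * f e \<theta>)"
    using dyn_cut_side_measurable[OF S edge_tail[OF e]] dyn_cut_side_measurable[OF S edge_head[OF e]]
    by (intro integrable_weighted_flow0[OF e] borel_measurable_diff) auto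
  with integrable_crossing_capacity[OF e] show ?thesis
    unfolding cut_slack_def[abs_def] by (simp add: mult.commute)
qed

lemma cut_capacity_minus_flow_value:
  "cut_capacity N S - flow_value N f = (\<Sum>e\<in>nedges N. \<integral>\<theta>. cut_slack N f S e \<theta> \<partial>lborel)"
proof -
  have "integrable lborel
      (\<lambda>\<theta>. f e \<theta> * (of_bool (S (fst e) \<theta>) - of_bool (S (snd e) (\<theta> + ntransit N e))))"
    if e: "e \<in> nedges N" for e
    using Bochner_Integration.integrable_diff[OF integrable_crossing_capacity[OF e] integrable_cut_slack[OF e]]
    by (simp add: cut_slack_def)
  then show ?thesis
    unfolding cut_capacity_eq_sum_crossing flow_value_eq_sum_crossing sum_subtractf[symmetric]
    by (intro sum.cong refl)
      (simp add: cut_slack_def integrable_crossing_capacity)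
qed

lemma weak_duality: "flow_value N f \<le> cut_capacity N S"
proof -
  have "0 \<le> (\<Sum>e\<in>nedges N. \<integral>\<theta>. cut_slack N f S e \<theta> \<partial>lborel)"
    by (intro sum_nonneg Bochner_Integration.integral_nonneg cut_slack_nonneg)
  then show ?thesis
    using cut_capacity_minus_flow_value by simp
qed

lemma complementary_slackness:
  assumes eq: "flow_value N f = cut_capacity N S" and e: "e \<in> nedges N"
  shows "AE \<theta> in lborel. cut_slack N f S e \<theta> = 0"
proof -
  have "(\<Sum>e\<in>nedges N. \<integral>\<theta>. cut_slack N f S e \<theta> \<partial>lborel) = 0"
    using cut_capacity_minus_flow_value eq by simp
  then have "(\<integral>\<theta>. cut_slack N f S e \<theta> \<partial>lborel) = 0"
    using finite_nedges e Bochner_Integration.integral_nonneg[OF cut_slack_nonneg]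
    by (subst (asm) sum_nonneg_eq_0_iff) auto
  then show ?thesis
    using integral_nonneg_eq_0_iff_AE[OF integrable_cut_slack[OF e]] cut_slack_nonneg[OF e] by simp
qed

end

end

lemma optimal_if_value_eq_capacity:
  assumes f: "is_dyn_flow N f" and S: "is_dyn_cut N S" and eq: "flow_value N f = cut_capacity N S"
  shows "is_max_dyn_flow N f" and "is_min_dyn_cut N S"
  using f S eq weak_duality[OF _ S] weak_duality[OF f] by (auto simp: is_max_dyn_flow_def is_min_dyn_cut_def)

lemma min_cut_zero_slack:
  assumes f: "is_dyn_flow N f" and S: "is_dyn_cut N S" and eq: "flow_value N f = cut_capacity N S"
    and S': "is_min_dyn_cut N S'" and e: "e \<in> nedges N"
  shows "AE \<theta> in lborel. cut_slack N f S' e \<theta> = 0"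
proof -
  have S'_cut: "is_dyn_cut N S'"
    using S' by (simp add: is_min_dyn_cut_def)
  have "flow_value N f = cut_capacity N S'"
    using weak_duality[OF f S'_cut] S' S eq by (auto simp: is_min_dyn_cut_def)
  then show ?thesis
    using complementary_slackness[OF f S'_cut _ e] by simp
qed

lemma max_flow_zero_slack:
  assumes f: "is_dyn_flow N f" and S: "is_dyn_cut N S" and eq: "flow_value N f = cut_capacity N S"
    and g: "is_max_dyn_flow N g" and e: "e \<in> nedges N"
  shows "AE \<theta> in lborel. cut_slack N g S e \<theta> = 0"
proof -
  have g_flow: "is_dyn_flow N g"
    using g by (simp add: is_max_dyn_flow_def)
  have "flow_value N g = cut_capacity N S"
    using weak_duality[OF g_flow S] g f eq by (auto simp: is_max_dyn_flow_def)
  then show ?thesis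
    using complementary_slackness[OF g_flow S _ e] by simp
qed

end

section \<open>Pulse trains\<close>

lemma real_plus_1_le_two_power: "k < 2 ^ i \<Longrightarrow> real k + 1 \<le> 2 ^ i"
  by (metis Suc_leI of_nat_Suc of_nat_le_iff of_nat_numeral of_nat_power add.commute)

definition pulses :: "nat \<Rightarrow> real set" where
  "pulses i = (\<Union>k<2 ^ i. {2 * real k ..< 2 * real k + 1})"

lemma pulses_measurable [measurable]: "pulses i \<in> sets borel"
  unfolding pulses_def by auto

lemma pulses_bounds: "\<theta> \<in> pulses i \<Longrightarrow> 0 \<le> \<theta> \<and> \<theta> < 2 ^ Suc i"
proof -
  assume "\<theta> \<in> pulses i"
  then obtain k where k: "k < 2 ^ i" "2 * real k \<le> \<theta>" "\<theta> < 2 * real k + 1"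
    by (auto simp: pulses_def)
  with real_plus_1_le_two_power[of k i] show ?thesis
    by auto
qed

lemma pulses_subset_horizon:
  assumes "i \<le> l" "\<theta> \<in> pulses i"
  shows "\<theta> \<in> {0..2 ^ Suc l}"
proof -
  have "(2::real) ^ Suc i \<le> 2 ^ Suc l"
    using assms(1) by (intro power_increasing) auto
  then have "\<theta> < 2 ^ Suc l"
    using pulses_bounds[OF assms(2)] by linarith
  with pulses_bounds[OF assms(2)] show ?thesis
    by simp
qed

lemma pulses_0: "\<theta> \<in> pulses 0 \<longleftrightarrow> 0 \<le> \<theta> \<and> \<theta> < 1"
  by (auto simp: pulses_def)

lemma pulses_Suc: "\<theta> \<in> pulses (Suc i) \<longleftrightarrow> \<theta> \<in> pulses i \<or> \<theta> - 2 ^ Suc i \<in> pulses i"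
proof
  assume "\<theta> \<in> pulses (Suc i)"
  then obtain k where k: "k < 2 ^ Suc i" "2 * real k \<le> \<theta>" "\<theta> < 2 * real k + 1"
    by (auto simp: pulses_def)
  show "\<theta> \<in> pulses i \<or> \<theta> - 2 ^ Suc i \<in> pulses i"
  proof (cases "k < 2 ^ i")
    case True
    with k show ?thesis
      by (auto simp: pulses_def)
  next
    case False
    with k(1) have "k - 2 ^ i < 2 ^ i" "real (k - 2 ^ i) = real k - 2 ^ i"
      by auto
    with k show ?thesis
      unfolding pulses_def by (intro disjI2 UN_I[of "k - 2 ^ i"]) auto
  qed
next
  assume "\<theta> \<in> pulses i \<or> \<theta> - 2 ^ Suc i \<in> pulses i"
  then show "\<theta> \<in> pulses (Suc i)"
  proof
    assume "\<theta> \<in> pulses i"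
    then show ?thesis
      by (auto simp: pulses_def intro: less_le_trans)
  next
    assume "\<theta> - 2 ^ Suc i \<in> pulses i"
    then obtain k where k: "k < 2 ^ i" "2 * real k \<le> \<theta> - 2 ^ Suc i" "\<theta> - 2 ^ Suc i < 2 * real k + 1"
      by (auto simp: pulses_def)
    then show ?thesis
      unfolding pulses_def by (intro UN_I[of "k + 2 ^ i"]) auto
  qed
qed

lemma indicator_pulses_Suc:
  "indicator (pulses (Suc i)) \<theta> = indicator (pulses i) \<theta> + (indicator (pulses i) (\<theta> - 2 ^ Suc i) :: real)"
  using pulses_Suc[of \<theta> i] pulses_bounds[of \<theta> i] pulses_bounds[of "\<theta> - 2 ^ Suc i" i]
  by (auto simp: indicator_def)

lemma pulse_in_pulses: "k < 2 ^ i \<Longrightarrow> x \<in> {2 * real k ..< 2 * real k + 1} \<Longrightarrow> x \<in> pulses i"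
  unfolding pulses_def by blast

lemma gap_not_in_pulses: "x \<in> {2 * real k + 1 <..< 2 * real k + 2} \<Longrightarrow> x \<notin> pulses i"
proof
  assume x: "x \<in> {2 * real k + 1 <..< 2 * real k + 2}" and "x \<in> pulses i"
  then obtain j where "2 * real j \<le> x" "x < 2 * real j + 1"
    by (auto simp: pulses_def)
  with x have "real k < real j" "real j < real (k + 1)"
    by auto
  then show False
    by (simp only: of_nat_less_iff)
qed

lemma pulse_end_window_in_horizon:
  assumes "k < 2 ^ l" "\<bar>x - (2 * real k + 1)\<bar> < 1"
  shows "x \<in> {0..2 ^ Suc l}"
  using assms(2) real_plus_1_le_two_power[OF assms(1)] by auto

lemma ess_change_at_pulse_ends:
  fixes h :: "real \<Rightarrow> 'a"
  assumes h: "AE \<theta> in lborel. \<theta> \<in> {0..2 ^ Suc l} \<longrightarrow> h \<theta> = (if \<theta> \<in> pulses l then a else b)"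
    and "a \<noteq> b" and D: "{0..2 ^ Suc l} \<subseteq> D" and k: "k < 2 ^ l"
  shows "ess_change D h (2 * real k + 1)"
  unfolding ess_change_def
proof (intro allI impI notI)
  fix \<epsilon> :: real
  assume "0 < \<epsilon>" and "\<exists>c. AE x in lborel. x \<in> D \<and> dist x (2 * real k + 1) < \<epsilon> \<longrightarrow> h x = c"
  then obtain c where c: "AE x in lborel. x \<in> D \<and> dist x (2 * real k + 1) < \<epsilon> \<longrightarrow> h x = c"
    by blast
  define \<delta> where "\<delta> = min \<epsilon> 1"
  have \<delta>: "0 < \<delta>" "\<delta> \<le> \<epsilon>" "\<delta> \<le> 1"
    using \<open>0 < \<epsilon>\<close> by (auto simp: \<delta>_def)
  have value_near: "c = (if p \<in> pulses l then a else b)"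
    if I: "\<And>x. x \<in> {p<..<q} \<Longrightarrow> \<bar>x - (2 * real k + 1)\<bar> < \<delta> \<and> (x \<in> pulses l \<longleftrightarrow> p \<in> pulses l)"
      and "p < q" for p q
  proof (rule AE_const_on_interval_unique[OF _ _ \<open>p < q\<close>])
    have near: "x \<in> D \<and> dist x (2 * real k + 1) < \<epsilon> \<and> x \<in> {0..2 ^ Suc l}" if "x \<in> {p<..<q}" for x
      using I[OF that] \<delta> D pulse_end_window_in_horizon[OF k, of x] by (auto simp: dist_real_def)
    show "AE x in lborel. x \<in> {p<..<q} \<longrightarrow> h x = c"
      using c by eventually_elim (use near in blast)
    show "AE x in lborel. x \<in> {p<..<q} \<longrightarrow> h x = (if p \<in> pulses l then a else b)"
      using h by eventually_elim (use near I in auto)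
  qed
  have "c = a"
    using value_near[of "2 * real k + 1 - \<delta> / 2" "2 * real k + 1"] \<delta> pulse_in_pulses[OF k] by auto
  moreover have "c = b"
    using value_near[of "2 * real k + 1 + \<delta> / 2" "2 * real k + 1 + \<delta>"] \<delta> gap_not_in_pulses[of _ k l]
    by auto
  ultimately show False
    using \<open>a \<noteq> b\<close> by simp
qed

section \<open>The network and an optimal flow-cut pair\<close>

text \<open>Vertex 0 is the source and 1 the sink; \<open>chain_x i\<close> and \<open>chain_y i\<close> are the vertices \<open>x\<^sub>i\<close> and
  \<open>y\<^sub>i\<close> of the path and of its detours.\<close>

declare One_nat_def [simp del] \<comment> \<open>keeps the sink vertex \<open>1\<close> from turning into \<open>Suc 0\<close> inside edges\<close>

definition chain_x :: "nat \<Rightarrow> nat" where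
  "chain_x i = 2 * i + 2"

definition chain_y :: "nat \<Rightarrow> nat" where
  "chain_y i = 2 * i + 3"

lemma chain_vertex_distinct [simp]:
  "chain_x i = chain_x j \<longleftrightarrow> i = j" "chain_y i = chain_y j \<longleftrightarrow> i = j"
  "chain_x i \<noteq> chain_y j" "chain_y j \<noteq> chain_x i"
  "chain_x i \<noteq> 0" "chain_x i \<noteq> 1" "chain_y i \<noteq> 0" "chain_y i \<noteq> 1"
  "0 \<noteq> chain_x i" "1 \<noteq> chain_x i" "0 \<noteq> chain_y i" "1 \<noteq> chain_y i"
  unfolding chain_x_def chain_y_def by presburger+

definition chain_edges :: "nat \<Rightarrow> (nat \<times> nat) set" where
  "chain_edges l = {(0, chain_x 0), (chain_x l, 1)} \<union> (\<lambda>i. (chain_x i, chain_x (Suc i))) ` {..<l}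
     \<union> (\<lambda>i. (chain_x i, chain_y i)) ` {..<l} \<union> (\<lambda>i. (chain_y i, chain_x (Suc i))) ` {..<l}"

definition chain_transit :: "nat \<times> nat \<Rightarrow> real" where
  "chain_transit e = (if even (fst e) \<and> snd e = fst e + 1 then 2 ^ (fst e div 2) else 0)"

definition chain_cap :: "nat \<Rightarrow> nat \<times> nat \<Rightarrow> real \<Rightarrow> real" where
  "chain_cap l e \<theta> =
    (if e = (0, chain_x 0) then if \<theta> < 1 then 2 ^ l + 1 else 0
     else if e = (chain_x l, 1) then 1
     else 2 ^ l + 1)"

definition chain_network :: "nat \<Rightarrow> dyn_network" where
  "chain_network l = \<lparr>nverts = {0..2 * l + 2}, nedges = chain_edges l, nsrc = 0, nsnk = 1,
     nhorizon = 2 ^ Suc l, ntransit = chain_transit, ncap = chain_cap l\<rparr>"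

lemma chain_network_simps [simp]:
  "nverts (chain_network l) = {0..2 * l + 2}" "nedges (chain_network l) = chain_edges l"
  "nsrc (chain_network l) = 0" "nsnk (chain_network l) = 1" "nhorizon (chain_network l) = 2 ^ Suc l"
  "ntransit (chain_network l) = chain_transit" "ncap (chain_network l) = chain_cap l"
  "ntransit (chain_network l) e = chain_transit e" "ncap (chain_network l) e \<theta> = chain_cap l e \<theta>"
  by (simp_all add: chain_network_def)

lemma chain_edges_iff:
  "e \<in> chain_edges l \<longleftrightarrow> e = (0, chain_x 0) \<or> e = (chain_x l, 1)
     \<or> (\<exists>i<l. e = (chain_x i, chain_x (Suc i)) \<or> e = (chain_x i, chain_y i) \<or> e = (chain_y i, chain_x (Suc i)))"
  unfolding chain_edges_def by blast

lemma chain_edges_cases [consumes 1, case_names source sink direct detour_in detour_out]: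
  assumes "e \<in> chain_edges l"
  obtains "e = (0, chain_x 0)" | "e = (chain_x l, 1)"
    | i where "i < l" "e = (chain_x i, chain_x (Suc i))"
    | i where "i < l" "e = (chain_x i, chain_y i)"
    | i where "i < l" "e = (chain_y i, chain_x (Suc i))"
  using assms unfolding chain_edges_iff by blast

lemma chain_edges_memI [simp]:
  "(0, chain_x 0) \<in> chain_edges l" "(chain_x l, 1) \<in> chain_edges l"
  "i < l \<Longrightarrow> (chain_x i, chain_x (Suc i)) \<in> chain_edges l"
  "i < l \<Longrightarrow> (chain_x i, chain_y i) \<in> chain_edges l"
  "i < l \<Longrightarrow> (chain_y i, chain_x (Suc i)) \<in> chain_edges l"
  unfolding chain_edges_iff by blast+

lemma chain_edges_into:
  "{e \<in> chain_edges l. snd e = 1} = {(chain_x l, 1)}"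
  "{e \<in> chain_edges l. snd e = chain_x 0} = {(0, chain_x 0)}"
  "i < l \<Longrightarrow> {e \<in> chain_edges l. snd e = chain_x (Suc i)} = {(chain_x i, chain_x (Suc i)), (chain_y i, chain_x (Suc i))}"
  "i < l \<Longrightarrow> {e \<in> chain_edges l. snd e = chain_y i} = {(chain_x i, chain_y i)}"
  unfolding chain_edges_iff by auto

lemma chain_edges_out_of:
  "{e \<in> chain_edges l. fst e = 1} = {}"
  "{e \<in> chain_edges l. fst e = chain_x l} = {(chain_x l, 1)}"
  "i < l \<Longrightarrow> {e \<in> chain_edges l. fst e = chain_x i} = {(chain_x i, chain_x (Suc i)), (chain_x i, chain_y i)}"
  "i < l \<Longrightarrow> {e \<in> chain_edges l. fst e = chain_y i} = {(chain_y i, chain_x (Suc i))}"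
  unfolding chain_edges_iff by auto

lemma chain_transit_simps [simp]:
  "chain_transit (0, chain_x 0) = 0" "chain_transit (chain_x l, 1) = 0"
  "chain_transit (chain_x i, chain_x (Suc i)) = 0" "chain_transit (chain_x i, chain_y i) = 2 ^ Suc i"
  "chain_transit (chain_y i, chain_x (Suc i)) = 0"
proof -
  have "(2 * i + 2) div 2 = Suc i"
    by presburger
  then show "chain_transit (chain_x i, chain_y i) = 2 ^ Suc i"
    by (simp add: chain_transit_def chain_x_def chain_y_def)
qed (simp_all add: chain_transit_def chain_x_def chain_y_def)

lemma chain_cap_simps [simp]:
  "chain_cap l (0, chain_x 0) \<theta> = (if \<theta> < 1 then 2 ^ l + 1 else 0)" "chain_cap l (chain_x l, 1) \<theta> = 1"
  "chain_cap l (chain_x i, chain_x (Suc i)) \<theta> = 2 ^ l + 1" "chain_cap l (chain_x i, chain_y i) \<theta> = 2 ^ l + 1"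
  "chain_cap l (chain_y i, chain_x (Suc i)) \<theta> = 2 ^ l + 1"
  by (simp_all add: chain_cap_def)

lemma isCont_chain_cap: "\<theta> \<noteq> 1 \<Longrightarrow> isCont (chain_cap l e) \<theta>"
proof (cases "e = (0, chain_x 0)")
  case False
  then have "chain_cap l e = (\<lambda>_. if e = (chain_x l, 1) then 1 else 2 ^ l + 1)"
    by (auto simp: chain_cap_def fun_eq_iff)
  then show ?thesis
    by simp
next
  case True
  assume "\<theta> \<noteq> 1"
  then consider "\<theta> \<in> {..<1}" | "\<theta> \<in> {1<..}"
    by fastforce
  then show ?thesis
  proof cases
    case 1
    have "continuous_on {..<1} (chain_cap l e)"
      by (rule continuous_on_eq[OF continuous_on_const]) (auto simp: True)
    with 1 show ?thesis
      by (simp add: continuous_on_eq_continuous_at)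
  next
    case 2
    have "continuous_on {1<..} (chain_cap l e)"
      by (rule continuous_on_eq[OF continuous_on_const]) (auto simp: True)
    with 2 show ?thesis
      by (simp add: continuous_on_eq_continuous_at)
  qed
qed

lemma chain_cap_discontinuities:
  "{\<theta> \<in> A. \<not> continuous (at \<theta> within A) (chain_cap l e)} \<subseteq> {1}"
  using isCont_chain_cap continuous_at_imp_continuous_at_within by blast

lemma valid_chain_network: "valid_network (chain_network l)"
  unfolding valid_network_def chain_network_simps
proof (intro conjI ballI)
  show "chain_edges l \<subseteq> {0..2 * l + 2} \<times> {0..2 * l + 2}"
    unfolding chain_edges_def chain_x_def chain_y_def by auto
  show "0 \<le> chain_transit e" for e
    by (simp add: chain_transit_def)
  show "0 \<le> chain_cap l e \<theta>" for e \<theta>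
    by (simp add: chain_cap_def)
  show "finite {\<theta> \<in> {0..2 ^ Suc l}. \<not> continuous (at \<theta> within {0..2 ^ Suc l}) (chain_cap l e)}" for e
    by (rule finite_subset[OF chain_cap_discontinuities]) simp
qed simp_all

lemma bounded_chain_network: "bounded_dyn_network (chain_network l) (2 ^ l + 1)"
proof
  show "ncap (chain_network l) e \<in> borel_measurable borel" for e
    unfolding chain_network_simps chain_cap_def by measurable
  show "ncap (chain_network l) e \<theta> \<le> 2 ^ l + 1" for e \<theta>
    by (auto simp: chain_cap_def)
qed (simp_all add: valid_chain_network)

interpretation chain: bounded_dyn_network "chain_network l" "2 ^ l + 1" for l
  by (rule bounded_chain_network)

text \<open>Out of \<open>x\<^sub>i\<close> and \<open>y\<^sub>i\<close> flows \<open>2 ^ (l - i - 1)\<close> times the pulse train of level \<open>i\<close>, delayed by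
  the detour's transit time on \<open>y\<^sub>i \<rightarrow> x\<^sub>i\<^sub>+\<^sub>1\<close>; the vertex numbering gives the level as \<open>v div 2 - 1\<close>.\<close>

definition chain_flow :: "nat \<Rightarrow> nat \<times> nat \<Rightarrow> real \<Rightarrow> real" where
  "chain_flow l e \<theta> =
    (if e = (0, chain_x 0) then 2 ^ l * indicator (pulses 0) \<theta>
     else if e = (chain_x l, 1) then indicator (pulses l) \<theta>
     else if e \<in> chain_edges l then 2 ^ (l - fst e div 2) *
       (if odd (fst e) then indicator (pulses (fst e div 2 - 1)) (\<theta> - 2 ^ (fst e div 2))
        else indicator (pulses (fst e div 2 - 1)) \<theta>)
     else 0)"

lemma chain_flow_simps [simp]:
  "chain_flow l (0, chain_x 0) \<theta> = 2 ^ l * indicator (pulses 0) \<theta>"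
  "chain_flow l (chain_x l, 1) \<theta> = indicator (pulses l) \<theta>"
  "i < l \<Longrightarrow> chain_flow l (chain_x i, chain_x (Suc i)) \<theta> = 2 ^ (l - Suc i) * indicator (pulses i) \<theta>"
  "i < l \<Longrightarrow> chain_flow l (chain_x i, chain_y i) \<theta> = 2 ^ (l - Suc i) * indicator (pulses i) \<theta>"
  "i < l \<Longrightarrow> chain_flow l (chain_y i, chain_x (Suc i)) \<theta>
    = 2 ^ (l - Suc i) * indicator (pulses i) (\<theta> - 2 ^ Suc i)"
proof -
  have "chain_x i div 2 = Suc i" "chain_y i div 2 = Suc i" "even (chain_x i)" "odd (chain_y i)"
    unfolding chain_x_def chain_y_def by presburger+
  then show "i < l \<Longrightarrow> chain_flow l (chain_x i, chain_x (Suc i)) \<theta> = 2 ^ (l - Suc i) * indicator (pulses i) \<theta>"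
    "i < l \<Longrightarrow> chain_flow l (chain_x i, chain_y i) \<theta> = 2 ^ (l - Suc i) * indicator (pulses i) \<theta>"
    "i < l \<Longrightarrow> chain_flow l (chain_y i, chain_x (Suc i)) \<theta>
      = 2 ^ (l - Suc i) * indicator (pulses i) (\<theta> - 2 ^ Suc i)"
    by (simp_all add: chain_flow_def)
qed (simp_all add: chain_flow_def)

lemma chain_flow_nonneg: "0 \<le> chain_flow l e \<theta>"
  by (simp add: chain_flow_def)

lemma chain_flow_eq_0_outside:
  assumes e: "e \<in> chain_edges l" and \<theta>: "\<theta> \<notin> {0..2 ^ Suc l - chain_transit e}"
  shows "chain_flow l e \<theta> = 0"
  using e
proof (cases rule: chain_edges_cases)
  case source
  have "(1::real) \<le> 2 ^ Suc l"
    by (rule one_le_power) simp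
  with \<theta> source show ?thesis
    by (auto simp: pulses_0 indicator_def)
next
  case sink
  with \<theta> show ?thesis
    using pulses_subset_horizon[of l l \<theta>] by (auto simp: indicator_def)
next
  case (direct i)
  with \<theta> show ?thesis
    using pulses_subset_horizon[of i l \<theta>] by (auto simp: indicator_def)
next
  case (detour_in i)
  have "(2::real) ^ Suc (Suc i) \<le> 2 ^ Suc l"
    using detour_in(1) by (intro power_increasing) auto
  with \<theta> detour_in show ?thesis
    using pulses_bounds[of \<theta> i] by (auto simp: indicator_def)
next
  case (detour_out i)
  have "(2::real) ^ Suc (Suc i) \<le> 2 ^ Suc l"
    using detour_out(1) by (intro power_increasing) auto
  with \<theta> detour_out show ?thesis
    using pulses_bounds[of "\<theta> - 2 ^ Suc i" i] by (auto simp: indicator_def)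
qed

lemma chain_flow_lt_cap:
  assumes e: "e \<in> chain_edges l" "e \<noteq> (chain_x l, 1)" and source: "e = (0, chain_x 0) \<Longrightarrow> \<theta> < 1"
  shows "chain_flow l e \<theta> < chain_cap l e \<theta>"
proof -
  have pow: "(2::real) ^ (l - Suc i) \<le> 2 ^ l" for i
    by (intro power_increasing) auto
  have "chain_flow l e \<theta> \<le> 2 ^ l"
    using e(1) by (cases rule: chain_edges_cases) (use pow in \<open>auto simp: indicator_def\<close>)
  moreover have "chain_cap l e \<theta> = 2 ^ l + 1"
    using e source by (auto simp: chain_cap_def)
  ultimately show ?thesis
    by simp
qed

lemma chain_flow_le_cap:
  assumes e: "e \<in> chain_edges l" and \<theta>: "0 \<le> \<theta>"
  shows "chain_flow l e \<theta> \<le> chain_cap l e \<theta>"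
proof (cases "e = (chain_x l, 1) \<or> e = (0, chain_x 0) \<and> 1 \<le> \<theta>")
  case True
  with \<theta> show ?thesis
    by (auto simp: pulses_0 indicator_def)
next
  case False
  then show ?thesis
    using chain_flow_lt_cap[OF e, of \<theta>] by fastforce
qed

lemma chain_flow_into_x:
  assumes "i \<le> l"
  shows "(\<Sum>e\<in>{e \<in> chain_edges l. snd e = chain_x i}. chain_flow l e (\<zeta> - chain_transit e))
    = 2 ^ (l - i) * indicator (pulses i) \<zeta>"
proof (cases i)
  case 0
  then show ?thesis
    by (simp add: chain_edges_into)
next
  case (Suc j)
  with assms have "j < l"
    by simp
  with Suc show ?thesis
    by (simp add: chain_edges_into indicator_pulses_Suc algebra_simps)
qed

lemma chain_flow_out_of_x:
  assumes "i \<le> l"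
  shows "(\<Sum>e\<in>{e \<in> chain_edges l. fst e = chain_x i}. chain_flow l e \<zeta>) = 2 ^ (l - i) * indicator (pulses i) \<zeta>"
proof (cases "i < l")
  case True
  then have "(2::real) ^ (l - i) = 2 ^ (l - Suc i) + 2 ^ (l - Suc i)"
    by (simp add: Suc_diff_Suc[symmetric])
  with True show ?thesis
    by (simp add: chain_edges_out_of algebra_simps)
next
  case False
  with assms have "i = l"
    by simp
  then show ?thesis
    by (simp add: chain_edges_out_of)
qed

lemma chain_inner_vertex_cases:
  fixes v :: nat
  assumes "v \<in> {0..2 * l + 2} - {0, 1}"
  obtains i where "i \<le> l" "v = chain_x i" | i where "i < l" "v = chain_y i"
proof (cases "even v")
  case True
  then obtain j where "v = 2 * j"
    by blast
  with assms have "j - 1 \<le> l" "v = chain_x (j - 1)"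
    by (auto simp: chain_x_def)
  then show ?thesis
    using that(1) by blast
next
  case False
  then obtain j where "v = 2 * j + 1"
    using oddE by blast
  with assms have "j - 1 < l" "v = chain_y (j - 1)"
    by (auto simp: chain_y_def)
  then show ?thesis
    using that(2) by blast
qed

lemma chain_flow_conservation:
  assumes "v \<in> {0..2 * l + 2} - {0, 1}"
  shows "net_inflow (chain_network l) (chain_flow l) v \<zeta> = 0"
  using assms
proof (cases rule: chain_inner_vertex_cases)
  case (1 i)
  then show ?thesis
    using chain_flow_into_x[of i l \<zeta>] chain_flow_out_of_x[of i l \<zeta>] by (simp add: net_inflow_def)
next
  case (2 i)
  then show ?thesis
    by (simp add: net_inflow_def chain_edges_into chain_edges_out_of)
qed

lemma is_dyn_flow_chain_flow: "is_dyn_flow (chain_network l) (chain_flow l)"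
  unfolding is_dyn_flow_def
proof (intro conjI ballI allI)
  show "chain_flow l e \<in> borel_measurable lborel" for e
    unfolding chain_flow_def by measurable
  show "if 0 \<le> \<theta> \<and> \<theta> \<le> nhorizon (chain_network l) - ntransit (chain_network l) e
      then 0 \<le> chain_flow l e \<theta> \<and> chain_flow l e \<theta> \<le> ncap (chain_network l) e \<theta>
      else chain_flow l e \<theta> = 0" if "e \<in> nedges (chain_network l)" for e \<theta>
    using that chain_flow_eq_0_outside[of e l \<theta>] chain_flow_nonneg[of l e \<theta>] chain_flow_le_cap[of e l \<theta>]
    by auto
  show "excess (chain_network l) (chain_flow l) v \<Theta> = 0"
    if "v \<in> nverts (chain_network l) - {nsrc (chain_network l), nsnk (chain_network l)}" for v \<Theta>
    using that chain_flow_conservation[of v l] by (simp add: excess_eq_integral_net_inflow)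
qed

text \<open>A vertex is on the source side exactly while the pulses of \<open>chain_flow\<close> pass through it.\<close>

definition chain_cut :: "nat \<Rightarrow> nat \<Rightarrow> real \<Rightarrow> bool" where
  "chain_cut l v \<theta> \<longleftrightarrow> 2 ^ Suc l < \<theta> \<or> v = 0
     \<or> (\<exists>i\<in>{..l}. v = chain_x i \<and> \<theta> \<in> pulses i) \<or> (\<exists>i\<in>{..<l}. v = chain_y i \<and> \<theta> - 2 ^ Suc i \<in> pulses i)"

lemma chain_cut_simps:
  "chain_cut l 0 \<theta>"
  "chain_cut l 1 \<theta> \<longleftrightarrow> 2 ^ Suc l < \<theta>"
  "i \<le> l \<Longrightarrow> chain_cut l (chain_x i) \<theta> \<longleftrightarrow> 2 ^ Suc l < \<theta> \<or> \<theta> \<in> pulses i"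
  "i < l \<Longrightarrow> chain_cut l (chain_y i) \<theta> \<longleftrightarrow> 2 ^ Suc l < \<theta> \<or> \<theta> - 2 ^ Suc i \<in> pulses i"
  by (auto simp: chain_cut_def)

lemma is_dyn_cut_chain_cut: "is_dyn_cut (chain_network l) (chain_cut l)"
  unfolding is_dyn_cut_def
proof (intro conjI ballI allI impI)
  show "{\<theta>. chain_cut l v \<theta>} \<in> sets lborel" for v
  proof -
    have "Measurable.pred borel (chain_cut l v)"
      unfolding chain_cut_def by measurable
    then show ?thesis
      by (simp add: Measurable.pred_def)
  qed
qed (auto simp: chain_cut_def)

lemma chain_cut_slack_zero:
  assumes e: "e \<in> chain_edges l"
  shows "cut_slack (chain_network l) (chain_flow l) (chain_cut l) e \<theta> = 0"
proof (cases "\<theta> \<in> {0..2 ^ Suc l}")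
  case False
  moreover have "0 \<le> chain_transit e"
    by (simp add: chain_transit_def)
  ultimately have "\<theta> \<notin> {0..2 ^ Suc l - chain_transit e}"
    by auto
  with False show ?thesis
    by (simp add: cut_slack_def crossing_capacity_def chain_flow_eq_0_outside[OF e])
next
  case True
  then have "\<not> 2 ^ Suc l < \<theta>"
    by simp
  with e True show ?thesis
    by (cases rule: chain_edges_cases) (auto simp: cut_slack_cases chain_cut_simps pulses_0 pulses_Suc)
qed

lemma chain_flow_value_eq_cut_capacity:
  "flow_value (chain_network l) (chain_flow l) = cut_capacity (chain_network l) (chain_cut l)"
  using chain.cut_capacity_minus_flow_value[OF is_dyn_flow_chain_flow is_dyn_cut_chain_cut]
  by (simp add: chain_cut_slack_zero)

section \<open>Every optimal flow and cut follows the pulses\<close>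

lemma chain_min_cut_zero_slack:
  assumes "is_min_dyn_cut (chain_network l) S" "e \<in> chain_edges l"
  shows "AE \<theta> in lborel. cut_slack (chain_network l) (chain_flow l) S e \<theta> = 0"
  using chain.min_cut_zero_slack[OF is_dyn_flow_chain_flow is_dyn_cut_chain_cut
      chain_flow_value_eq_cut_capacity] assms
  by simp

lemma chain_max_flow_zero_slack:
  assumes "is_max_dyn_flow (chain_network l) g" "e \<in> chain_edges l"
  shows "AE \<theta> in lborel. cut_slack (chain_network l) g (chain_cut l) e \<theta> = 0"
  using chain.max_flow_zero_slack[OF is_dyn_flow_chain_flow is_dyn_cut_chain_cut
      chain_flow_value_eq_cut_capacity] assms
  by simp

lemma min_cut_follows_unsaturated_edge:
  assumes S: "is_min_dyn_cut (chain_network l) S" and e: "e \<in> chain_edges l" "e \<noteq> (chain_x l, 1)"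
  shows "AE \<theta> in lborel. \<theta> \<in> {0..2 ^ Suc l} \<and> (e = (0, chain_x 0) \<longrightarrow> \<theta> < 1) \<and> S (fst e) \<theta>
    \<longrightarrow> S (snd e) (\<theta> + chain_transit e)"
  using chain_min_cut_zero_slack[OF S e(1)]
proof eventually_elim
  case (elim \<theta>)
  show ?case
  proof (intro impI, rule ccontr)
    assume \<theta>: "\<theta> \<in> {0..2 ^ Suc l} \<and> (e = (0, chain_x 0) \<longrightarrow> \<theta> < 1) \<and> S (fst e) \<theta>"
      and "\<not> S (snd e) (\<theta> + chain_transit e)"
    then have "chain_flow l e \<theta> = chain_cap l e \<theta>"
      using elim by (simp add: cut_slack_cases)
    with chain_flow_lt_cap[OF e, of \<theta>] \<theta> show False
      by auto
  qed
qed

lemma min_cut_contains_pulses: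
  assumes S: "is_min_dyn_cut (chain_network l) S"
  shows "i \<le> l \<Longrightarrow> AE \<theta> in lborel. \<theta> \<in> pulses i \<longrightarrow> S (chain_x i) \<theta>"
proof (induction i)
  case 0
  have source: "S 0 \<theta>" if "\<theta> \<in> {0..2 ^ Suc l}" for \<theta>
    using S is_dyn_cut_source[of "chain_network l" S \<theta>] that by (simp add: is_min_dyn_cut_def)
  have "AE \<theta> in lborel. \<theta> \<in> {0..2 ^ Suc l} \<and> \<theta> < 1 \<and> S 0 \<theta> \<longrightarrow> S (chain_x 0) \<theta>"
    using min_cut_follows_unsaturated_edge[OF S, of "(0, chain_x 0)"] by simp
  then show ?case
    by eventually_elim (use source pulses_subset_horizon[of 0 l] in \<open>auto simp: pulses_0\<close>)
next
  case (Suc i)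
  then have i: "i < l" and IH: "AE \<theta> in lborel. \<theta> \<in> pulses i \<longrightarrow> S (chain_x i) \<theta>"
    by simp_all
  have horizon: "\<theta> \<in> {0..2 ^ Suc l}" if "\<theta> \<in> pulses (Suc i)" for \<theta>
    using pulses_subset_horizon[of "Suc i" l \<theta>] that i by simp
  have "AE \<theta> in lborel. \<theta> \<in> {0..2 ^ Suc l} \<and> S (chain_x i) \<theta> \<longrightarrow> S (chain_x (Suc i)) \<theta>"
    using min_cut_follows_unsaturated_edge[OF S, of "(chain_x i, chain_x (Suc i))"] i by simp
  with IH have direct: "AE \<theta> in lborel. \<theta> \<in> pulses i \<longrightarrow> S (chain_x (Suc i)) \<theta>"
    by eventually_elim (use horizon pulses_Suc in blast)
  have "AE \<theta> in lborel. \<theta> \<in> {0..2 ^ Suc l} \<and> S (chain_x i) \<theta> \<longrightarrow> S (chain_y i) (\<theta> + 2 ^ Suc i)"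
    using min_cut_follows_unsaturated_edge[OF S, of "(chain_x i, chain_y i)"] i by simp
  with IH have to_detour: "AE \<theta> in lborel. \<theta> \<in> pulses i \<longrightarrow> S (chain_y i) (\<theta> + 2 ^ Suc i)"
    by eventually_elim (use horizon pulses_Suc in blast)
  have from_detour: "AE \<theta> in lborel. \<theta> \<in> {0..2 ^ Suc l} \<and> S (chain_y i) \<theta> \<longrightarrow> S (chain_x (Suc i)) \<theta>"
    using min_cut_follows_unsaturated_edge[OF S, of "(chain_y i, chain_x (Suc i))"] i by simp
  have "AE \<theta> in lborel. \<theta> \<in> pulses i \<longrightarrow> S (chain_x (Suc i)) (\<theta> + 2 ^ Suc i)"
    using to_detour AE_translate[OF from_detour, of "2 ^ Suc i"]
    by eventually_elim (use horizon pulses_Suc in fastforce)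
  from AE_translate[OF this, of "- (2 ^ Suc i)"] direct
  show ?case
    by eventually_elim (auto simp: pulses_Suc)
qed

lemma min_cut_at_last_vertex:
  assumes S: "is_min_dyn_cut (chain_network l) S"
  shows "AE \<theta> in lborel. \<theta> \<in> {0..2 ^ Suc l} \<longrightarrow> S (chain_x l) \<theta> = (\<theta> \<in> pulses l)"
proof -
  have sink: "\<not> S 1 \<theta>" if "\<theta> \<in> {0..2 ^ Suc l}" for \<theta>
    using S is_dyn_cut_sink[of "chain_network l" S \<theta>] that by (simp add: is_min_dyn_cut_def)
  have "AE \<theta> in lborel. \<theta> \<in> {0..2 ^ Suc l} \<and> \<theta> \<notin> pulses l \<longrightarrow> \<not> S (chain_x l) \<theta>"
    using chain_min_cut_zero_slack[OF S chain_edges_memI(2)]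
    by eventually_elim (use sink in \<open>auto simp: cut_slack_cases indicator_def\<close>)
  with min_cut_contains_pulses[OF S order_refl] show ?thesis
    by eventually_elim auto
qed

text \<open>Complementary slackness only saturates the sink edge during the pulses; in between, \<open>g\<close>
  vanishes because its value, the integral over the sink edge, equals that of \<open>chain_flow\<close>.\<close>

lemma max_flow_on_sink_edge:
  assumes g: "is_max_dyn_flow (chain_network l) g"
  shows "AE \<theta> in lborel. \<theta> \<in> {0..2 ^ Suc l} \<longrightarrow> g (chain_x l, 1) \<theta> = indicator (pulses l) \<theta>"
proof -
  let ?e = "(chain_x l, 1)" and ?T = "2 ^ Suc l :: real"
  have g_flow: "is_dyn_flow (chain_network l) g"
    using g by (simp add: is_max_dyn_flow_def)
  have value_sink: "flow_value (chain_network l) h = (\<integral>\<zeta>. indicator {0..?T} \<zeta> * h ?e \<zeta> \<partial>lborel)" for h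
    by (simp add: flow_value_def excess_eq_integral_net_inflow net_inflow_def chain_edges_into
        chain_edges_out_of set_lebesgue_integral_def)
  have saturated: "AE \<theta> in lborel. \<theta> \<in> pulses l \<longrightarrow> g ?e \<theta> = 1"
    using chain_max_flow_zero_slack[OF g chain_edges_memI(2)]
  proof eventually_elim
    case (elim \<theta>)
    show ?case
    proof
      assume "\<theta> \<in> pulses l"
      with pulses_subset_horizon[OF order_refl this] elim show "g ?e \<theta> = 1"
        by (simp add: cut_slack_cases chain_cut_simps)
    qed
  qed
  have gi: "integrable lborel (\<lambda>\<zeta>. indicator {0..?T} \<zeta> * g ?e \<zeta>)"
    and fi: "integrable lborel (\<lambda>\<zeta>. indicator {0..?T} \<zeta> * chain_flow l ?e \<zeta>)"
    using chain.integrable_weighted_flow0[OF g_flow, where e = ?e and h = "indicator {0..?T}"]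
      chain.integrable_weighted_flow0[OF is_dyn_flow_chain_flow[of l], where e = ?e and h = "indicator {0..?T}"]
    by simp_all
  have "flow_value (chain_network l) g = flow_value (chain_network l) (chain_flow l)"
    using g is_dyn_flow_chain_flow[of l] chain_flow_value_eq_cut_capacity[of l]
      chain.weak_duality[OF g_flow is_dyn_cut_chain_cut] by (auto simp: is_max_dyn_flow_def)
  then have "(\<integral>\<zeta>. indicator {0..?T} \<zeta> * g ?e \<zeta> - indicator {0..?T} \<zeta> * chain_flow l ?e \<zeta> \<partial>lborel) = 0"
    using gi fi by (simp add: value_sink)
  moreover have "AE \<zeta> in lborel. 0 \<le> indicator {0..?T} \<zeta> * g ?e \<zeta> - indicator {0..?T} \<zeta> * chain_flow l ?e \<zeta>"
    using saturated by eventually_elim (use chain.flow_nonneg[OF g_flow] in \<open>auto simp: indicator_def\<close>)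
  ultimately have "AE \<zeta> in lborel. indicator {0..?T} \<zeta> * g ?e \<zeta> - indicator {0..?T} \<zeta> * chain_flow l ?e \<zeta> = 0"
    using integral_nonneg_eq_0_iff_AE[OF Bochner_Integration.integrable_diff[OF gi fi]] by simp
  then show ?thesis
    by eventually_elim (auto simp: indicator_def)
qed

lemma chain_min_cut_complexity:
  assumes S: "is_min_dyn_cut (chain_network l) S"
  shows "enat (2 ^ l) \<le> cut_complexity (chain_network l) S"
proof -
  have "ess_change {0..} (S (chain_x l)) (2 * real k + 1)" if "k < 2 ^ l" for k
    using min_cut_at_last_vertex[OF S] that
    by (intro ess_change_at_pulse_ends[where a = True and b = False]) (auto elim!: eventually_mono)
  then have "enat (card {..<(2::nat) ^ l}) \<le> cut_complexity (chain_network l) S"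
    unfolding cut_complexity_def
    by (intro card_le_ecard_if_inj_on[of "\<lambda>k. (chain_x l, 2 * real k + 1)"])
      (auto simp: inj_on_def chain_x_def)
  then show ?thesis
    by simp
qed

lemma chain_max_flow_complexity:
  assumes g: "is_max_dyn_flow (chain_network l) g"
  shows "enat (2 ^ l) \<le> flow_complexity (chain_network l) g"
proof -
  have "ess_change {0..2 ^ Suc l} (g (chain_x l, 1)) (2 * real k + 1)" if "k < 2 ^ l" for k
    using max_flow_on_sink_edge[OF g] that
    by (intro ess_change_at_pulse_ends[where a = 1 and b = 0]) (auto elim!: eventually_mono)
  moreover have "2 * real k + 1 < 2 ^ Suc l" if "k < 2 ^ l" for k
    using real_plus_1_le_two_power[OF that] by simp
  ultimately have "enat (card {..<(2::nat) ^ l}) \<le> flow_complexity (chain_network l) g"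
    unfolding flow_complexity_def
    by (intro card_le_ecard_if_inj_on[of "\<lambda>k. ((chain_x l, 1), 2 * real k + 1)"])
      (auto simp: inj_on_def)
  then show ?thesis
    by simp
qed

lemma acyclic_chain_edges: "acyclic (chain_edges l)"
  by (rule acyclic_if_rank_increasing[where rank = "\<lambda>v. if v = 1 then 2 * l + 3 else v"])
    (auto simp: chain_edges_iff chain_x_def chain_y_def)

lemma one_capacity_change_chain_network: "one_capacity_change (chain_network l)"
  unfolding one_capacity_change_def chain_network_simps
proof (rule bexI[of _ "(0, chain_x 0)"], rule exI[of _ 1], rule exI[of _ "2 ^ l + 1"], rule exI[of _ 0],
    intro conjI ballI impI)
  show "(1::real) < 2 ^ Suc l"
    using one_le_power[of "2::real" l] by (simp only: power_Suc) linarith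
  show "\<exists>c. \<forall>\<theta>\<in>{0..2 ^ Suc l}. chain_cap l e \<theta> = c" if "e \<in> chain_edges l - {(0, chain_x 0)}" for e
    using that by (auto simp: chain_cap_def)
  show "(2::real) ^ l + 1 \<noteq> 0"
    using zero_le_power[of "2::real" l] by linarith
qed simp_all

lemma discrete_time_chain_network: "discrete_time (chain_network l)"
  unfolding discrete_time_def chain_network_simps
proof (intro conjI ballI impI)
  show "(2::real) ^ Suc l \<in> \<nat>"
    by (metis of_nat_in_Nats of_nat_numeral of_nat_power)
  show "chain_transit e \<in> \<nat>" for e
    by (simp add: chain_transit_def) (metis of_nat_in_Nats of_nat_numeral of_nat_power)
  show "\<theta> \<in> \<nat>" if "\<theta> \<in> {0..2 ^ Suc l}" "\<not> continuous (at \<theta> within {0..2 ^ Suc l}) (chain_cap l e)" for e \<theta>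
    using that chain_cap_discontinuities[of "{0..2 ^ Suc l}" l e] by auto
qed

lemma integral_capacities_chain_network: "integral_capacities (chain_network l)"
proof -
  have "(2::real) ^ l + 1 \<in> \<nat>"
    by (metis Nats_1 Nats_add of_nat_in_Nats of_nat_numeral of_nat_power)
  then show ?thesis
    by (auto simp: integral_capacities_def chain_cap_def)
qed

lemma size_bounded_chain_network:
  assumes "1 \<le> l"
  shows "size_bounded (chain_network l) (5 * l)"
proof -
  have pow: "(2::real) ^ Suc l \<le> 2 ^ (5 * l)"
    using assms by (intro power_increasing) auto
  have image_card: "card (h ` {..<l}) \<le> l" for h :: "nat \<Rightarrow> nat \<times> nat"
    using card_image_le[of "{..<l}" h] by simp
  have edges: "card (chain_edges l) \<le> 2 + l + l + l"
    unfolding chain_edges_def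
    by (intro card_Un_le[THEN order_trans] add_mono image_card card_insert_le_m1) auto
  have transit: "chain_transit e \<le> 2 ^ Suc l" if "e \<in> chain_edges l" for e
    using that
  proof (cases rule: chain_edges_cases)
    case (detour_in i)
    then show ?thesis
      by (simp add: power_increasing)
  qed simp_all
  have cap: "chain_cap l e \<theta> \<le> 2 ^ Suc l" for e \<theta>
  proof -
    have "chain_cap l e \<theta> \<le> 2 ^ l + 1"
      by (simp add: chain_cap_def)
    then show ?thesis
      using one_le_power[of "2::real" l] by (simp only: power_Suc) linarith
  qed
  show ?thesis
    unfolding size_bounded_def chain_network_simps
  proof (intro conjI ballI)
    show "card {0..2 * l + 2} \<le> 5 * l" "card (chain_edges l) \<le> 5 * l"
      using assms edges by simp_all
    show "chain_transit e \<le> 2 ^ (5 * l)" if "e \<in> chain_edges l" for e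
      using transit[OF that] pow by (rule order_trans)
    show "chain_cap l e \<theta> \<le> 2 ^ (5 * l)" for e \<theta>
      using cap pow by (rule order_trans)
  qed (rule pow)
qed

theorem theorem4:
  shows "\<exists>c k :: nat. \<forall>l::nat. 1 \<le> l \<longrightarrow>
    (\<exists>N. valid_network N \<and> acyclic (nedges N) \<and> one_capacity_change N \<and>
         discrete_time N \<and> integral_capacities N \<and> size_bounded N (c * l ^ k) \<and>
         (\<exists>f. is_max_dyn_flow N f) \<and> (\<exists>S. is_min_dyn_cut N S) \<and>
         (\<forall>S. is_min_dyn_cut N S \<longrightarrow> enat (2 ^ l) \<le> cut_complexity N S) \<and>
         (\<forall>f. is_max_dyn_flow N f \<longrightarrow> enat (2 ^ l) \<le> flow_complexity N f))"
proof (rule exI[of _ 5], rule exI[of _ 1], intro allI impI)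
  fix l :: nat
  assume "1 \<le> l"
  let ?N = "chain_network l"
  have optimal: "is_max_dyn_flow ?N (chain_flow l)" "is_min_dyn_cut ?N (chain_cut l)"
    using chain.optimal_if_value_eq_capacity[OF is_dyn_flow_chain_flow is_dyn_cut_chain_cut
        chain_flow_value_eq_cut_capacity] .
  show "\<exists>N. valid_network N \<and> acyclic (nedges N) \<and> one_capacity_change N \<and>
         discrete_time N \<and> integral_capacities N \<and> size_bounded N (5 * l ^ 1) \<and>
         (\<exists>f. is_max_dyn_flow N f) \<and> (\<exists>S. is_min_dyn_cut N S) \<and>
         (\<forall>S. is_min_dyn_cut N S \<longrightarrow> enat (2 ^ l) \<le> cut_complexity N S) \<and>
         (\<forall>f. is_max_dyn_flow N f \<longrightarrow> enat (2 ^ l) \<le> flow_complexity N f)"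
    using valid_chain_network acyclic_chain_edges one_capacity_change_chain_network
      discrete_time_chain_network integral_capacities_chain_network
      size_bounded_chain_network[OF \<open>1 \<le> l\<close>] optimal
      chain_min_cut_complexity chain_max_flow_complexity
    by (intro exI[of _ ?N]) auto
qed

end
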